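(* Let $H$ and $U$ be Hilbert spaces, let $A\colon D(A)\subset H\to H$ generate a strongly continuous contraction semigroup $\{e^{tA}\}_{t\ge0}$ on $H$, and let $B\colon U\to H$ be bounded linear with adjoint $B^*$. Let $(a_n,b_n)$, $n\in\mathbb{N}$, be a sequence of pairwise disjoint intervals in $[0,\infty)$, let $(c_n)_{n\in\mathbb{N}}$ be a sequence of positive real numbers, and let $\alpha\in L^\infty([0,\infty),[0,1])$ be such that, for every $n\in\mathbb{N}$, the function $t\mapsto\alpha(a_n+t)$ restricted to $[0,b_n-a_n]$ is of class $\mathcal{K}(A,B,b_n-a_n,c_n)$. Assume that $\sup_{n\in\mathbb{N}}(b_n-a_n)<\infty$ and $\sum_{n=1}^\infty c_n=\infty$. Then for every $z_0\in H$, the mild solution $z(\cdot)$ of $\dot z=Az-\alpha(t)BB^*z$, $z(0)=z_0$, satisfies $\|z(t)\|_H\to0$ as $t\to\infty$.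
   Context: For $T>0$ and $c>0$, a function $\tilde\alpha\in L^\infty([0,T],[0,1])$ is said to be of class $\mathcal{K}(A,B,T,c)$ if $\int_0^T\tilde\alpha(t)\|B^*e^{tA}z_0\|_U^2\,dt\ge c\|z_0\|_H^2$ for all $z_0\in H$. The mild solution of $\dot z=Az-\alpha(t)BB^*z$, $z(0)=z_0$ is the unique $z\in C([0,\infty);H)$ with $z(t)=e^{tA}z_0-\int_0^te^{(t-s)A}\alpha(s)BB^*z(s)\,ds$ for all $t\ge0$. *)

theory Defs
  imports "HOL-Analysis.Analysis"
begin

text \<open>Strongly continuous contraction semigroup \<open>S t = e^{tA}\<close> on a (real) Hilbert space.
  The generator \<open>A\<close> enters the statement only through its semigroup.\<close>
definition contraction_semigroup :: "(real \<Rightarrow> ('h::real_normed_vector \<Rightarrow>\<^sub>L 'h)) \<Rightarrow> bool" where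
  "contraction_semigroup S \<longleftrightarrow>
     S 0 = id_blinfun \<and>
     (\<forall>t\<ge>0. \<forall>s\<ge>0. S (t + s) = S t o\<^sub>L S s) \<and>
     (\<forall>t\<ge>0. norm (S t) \<le> 1) \<and>
     (\<forall>x. continuous_on {0..} (\<lambda>t. S t x))"

definition is_adjoint :: "('u::real_inner \<Rightarrow>\<^sub>L 'h::real_inner) \<Rightarrow> ('h \<Rightarrow>\<^sub>L 'u) \<Rightarrow> bool" where
  "is_adjoint B Bs \<longleftrightarrow> (\<forall>u h. inner (B u) h = inner u (Bs h))"

text \<open>Class \<open>K(A,B,T,c)\<close>, with \<open>S t = e^{tA}\<close> and \<open>Bs = B^*\<close>.\<close>
definition classK :: "(real \<Rightarrow> ('h::real_normed_vector \<Rightarrow>\<^sub>L 'h)) \<Rightarrow> ('h \<Rightarrow>\<^sub>L 'u::real_normed_vector)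
    \<Rightarrow> real \<Rightarrow> real \<Rightarrow> (real \<Rightarrow> real) \<Rightarrow> bool" where
  "classK S Bs T c al \<longleftrightarrow>
     T > 0 \<and> c > 0 \<and>
     al \<in> borel_measurable (restrict_space lborel {0..T}) \<and>
     (\<forall>t\<in>{0..T}. 0 \<le> al t \<and> al t \<le> 1) \<and>
     (\<forall>z0. c * (norm z0)\<^sup>2 \<le> (LINT t:{0..T}|lborel. al t * (norm (Bs (S t z0)))\<^sup>2))"

definition mild_solution :: "(real \<Rightarrow> ('h::real_normed_vector \<Rightarrow>\<^sub>L 'h)) \<Rightarrow> ('u::real_normed_vector \<Rightarrow>\<^sub>L 'h)
    \<Rightarrow> ('h \<Rightarrow>\<^sub>L 'u) \<Rightarrow> (real \<Rightarrow> real) \<Rightarrow> 'h \<Rightarrow> (real \<Rightarrow> 'h) \<Rightarrow> bool" where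
  "mild_solution S B Bs \<alpha> z0 z \<longleftrightarrow>
     continuous_on {0..} z \<and>
     (\<forall>t\<ge>0. ((\<lambda>s. S (t - s) (\<alpha> s *\<^sub>R B (Bs (z s)))) has_integral (S t z0 - z t)) {0..t})"

end

theory Submission
  imports Defs
begin

text \<open>Along the mild solution the energy \<open>\<parallel>z t\<parallel>\<^sup>2 + 2 \<integral>\<^sub>0\<^sup>t \<alpha> \<parallel>B\<^sup>* z\<parallel>\<^sup>2\<close> does not increase;
  since \<open>z\<close> need not be differentiable, this is shown from the variation-of-constants formula restarted
  at every time, via one-sided local increment bounds. Hence \<open>\<parallel>z\<parallel>\<close> decreases and the total dissipation
  is at most \<open>\<parallel>z 0\<parallel>\<^sup>2/2\<close>. On a window \<open>[a\<^sub>n, b\<^sub>n]\<close> the solution stays within \<open>\<parallel>B\<parallel> \<integral> \<alpha> \<parallel>B\<^sup>* z\<parallel>\<close>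
  of the free orbit of \<open>z (a\<^sub>n)\<close>, so, with Cauchy--Schwarz, the class \<open>\<K>\<close> inequality yields
  \<open>c\<^sub>n \<parallel>z (a\<^sub>n)\<parallel>\<^sup>2 \<le> \<kappa> \<cdot> (dissipation on the window)\<close> with \<open>\<kappa>\<close> depending only on \<open>\<parallel>B\<parallel>\<close> and
  \<open>sup (b\<^sub>n - a\<^sub>n)\<close>. The windows are disjoint, so \<open>\<Sum> c\<^sub>n \<parallel>z (a\<^sub>n)\<parallel>\<^sup>2\<close> is bounded; as \<open>\<Sum> c\<^sub>n = \<infinity>\<close>,
  \<open>\<parallel>z\<parallel>\<close> gets arbitrarily small, and monotonicity gives the limit.\<close>

lemma borel_measurable_lebesgue_on_Icc_of_nonneg:
  fixes f :: "real \<Rightarrow> real"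
  assumes "f \<in> borel_measurable (restrict_space lborel {0..})" "0 \<le> p"
  shows "f \<in> borel_measurable (lebesgue_on {p..q})"
proof -
  have "f \<in> borel_measurable (restrict_space lborel {p..q})"
    using measurable_restrict_mono[OF assms(1)] assms(2) by auto
  moreover have "sets lborel \<subseteq> sets (lebesgue :: real measure)"
    by (rule subsetI, rule sets_completionI_sets)
  ultimately show ?thesis
    by (auto intro: borel_measurable_subalgebra[OF mono_restrict_space] simp: space_restrict_space)
qed

lemma integrable_on_weighted_continuous:
  fixes w h :: "real \<Rightarrow> real"
  assumes w: "w \<in> borel_measurable (restrict_space lborel {0..})" "\<forall>t\<ge>0. 0 \<le> w t \<and> w t \<le> 1"
    and h: "continuous_on {p..q} h" and p: "0 \<le> p"
  shows "(\<lambda>r. w r * h r) integrable_on {p..q}"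
proof -
  obtain M where M: "\<forall>x\<in>{p..q}. norm (h x) \<le> M"
    using compact_imp_bounded[OF compact_continuous_image[OF h compact_Icc]]
    by (auto simp: bounded_iff)
  have hm: "h \<in> borel_measurable (lebesgue_on {p..q})"
    by (rule continuous_imp_measurable_on_sets_lebesgue[OF h]) auto
  have wm: "w \<in> borel_measurable (lebesgue_on {p..q})"
    by (rule borel_measurable_lebesgue_on_Icc_of_nonneg[OF w(1) p])
  show ?thesis
  proof (rule measurable_bounded_by_integrable_imp_integrable_real[where g="\<lambda>_. M"])
    show "(\<lambda>r. w r * h r) \<in> borel_measurable (lebesgue_on {p..q})"
      using hm wm by measurable
    show "(\<lambda>_. M) integrable_on {p..q}"
      by (rule has_integral_integrable[OF has_integral_const_real])
    show "\<bar>w x * h x\<bar> \<le> M" if "x \<in> {p..q}" for x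
    proof -
      have "\<bar>w x * h x\<bar> \<le> \<bar>h x\<bar>"
        using w(2) that p by (simp add: abs_mult mult_left_le_one_le)
      then show ?thesis using M that by fastforce
    qed
  qed auto
qed

lemma weighted_integral_square_le:
  fixes w g :: "real \<Rightarrow> real"
  assumes wg: "(\<lambda>r. w r * g r) integrable_on {p..q}"
    and wg2: "(\<lambda>r. w r * (g r)\<^sup>2) integrable_on {p..q}"
    and w: "\<And>r. r \<in> {p..q} \<Longrightarrow> 0 \<le> w r \<and> w r \<le> 1" and pq: "p < q"
  shows "(integral {p..q} (\<lambda>r. w r * g r))\<^sup>2 \<le> (q - p) * integral {p..q} (\<lambda>r. w r * (g r)\<^sup>2)"
proof -
  define J where "J = integral {p..q} (\<lambda>r. w r * g r)"
  define E where "E = integral {p..q} (\<lambda>r. w r * (g r)\<^sup>2)"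
  have E0: "0 \<le> E"
    unfolding E_def by (rule integral_nonneg[OF wg2]) (use w in auto)
  \<comment> \<open>Young's inequality \<open>|x| \<le> l + x\<^sup>2/(4l)\<close>, integrated against the weight and optimised in \<open>l\<close>.\<close>
  have young: "\<bar>J\<bar> \<le> l * (q - p) + E / (4 * l)" if l: "0 < l" for l
  proof -
    have rhs: "((\<lambda>r. l + w r * (g r)\<^sup>2 / (4 * l)) has_integral (l * (q - p) + E / (4 * l))) {p..q}"
      unfolding E_def using has_integral_const_real[of l p q] pq
      by (intro has_integral_add has_integral_divide integrable_integral[OF wg2]) (auto simp: mult.commute)
    have pointwise: "\<bar>w r * g r\<bar> \<le> l + w r * (g r)\<^sup>2 / (4 * l)" if r: "r \<in> {p..q}" for r
    proof -
      have "4 * l * \<bar>g r\<bar> \<le> 4 * l * l + (g r)\<^sup>2"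
        using zero_le_power2[of "\<bar>g r\<bar> - 2 * l"] by (simp add: power2_eq_square algebra_simps)
      then have "\<bar>g r\<bar> \<le> l + (g r)\<^sup>2 / (4 * l)"
        using l by (simp add: field_simps)
      then have "w r * \<bar>g r\<bar> \<le> w r * (l + (g r)\<^sup>2 / (4 * l))"
        using w[OF r] by (intro mult_left_mono) auto
      moreover have "w r * l \<le> l" using w[OF r] l by (simp add: mult_left_le_one_le)
      ultimately show ?thesis using w[OF r] by (simp add: abs_mult algebra_simps)
    qed
    have "J \<le> l * (q - p) + E / (4 * l)"
      unfolding J_def
      by (rule has_integral_le[OF integrable_integral[OF wg] rhs]) (metis abs_le_D1 pointwise)
    moreover have "- J \<le> l * (q - p) + E / (4 * l)"
      unfolding J_def
      by (rule has_integral_le[OF has_integral_neg[OF integrable_integral[OF wg]] rhs])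
        (metis abs_le_D2 pointwise)
    ultimately show ?thesis by linarith
  qed
  show ?thesis
  proof (cases "J = 0")
    case True
    then show ?thesis using E0 pq unfolding J_def E_def by simp
  next
    case False
    then have J0: "0 < \<bar>J\<bar>" by simp
    define l where "l = \<bar>J\<bar> / (2 * (q - p))"
    have l0: "0 < l" using J0 pq by (simp add: l_def)
    have lq: "l * (q - p) = \<bar>J\<bar> / 2" using pq by (simp add: l_def field_simps)
    have El: "E / (4 * l) = E * (q - p) / (2 * \<bar>J\<bar>)" using pq J0 by (simp add: l_def field_simps)
    have "\<bar>J\<bar> \<le> \<bar>J\<bar> / 2 + E * (q - p) / (2 * \<bar>J\<bar>)"
      using young[OF l0] unfolding lq El .
    then have "\<bar>J\<bar> * \<bar>J\<bar> \<le> E * (q - p)" using J0 by (simp add: field_simps)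
    then show ?thesis unfolding J_def E_def by (simp add: power2_eq_square mult.commute)
  qed
qed

lemma antimono_of_local_increment_bound:
  fixes f :: "real \<Rightarrow> real"
  assumes local: "\<And>e. 0 < e \<Longrightarrow> \<exists>d>0. \<forall>x h. a \<le> x \<longrightarrow> 0 < h \<longrightarrow> h < d \<longrightarrow> x + h \<le> b \<longrightarrow>
      f (x + h) \<le> f x + e * h"
    and st: "a \<le> s" "s \<le> t" "t \<le> b"
  shows "f t \<le> f s"
proof (cases "s = t")
  case False
  with st have "s < t" by simp
  show ?thesis
  proof (rule field_le_epsilon)
    fix e :: real assume "0 < e"
    then obtain d where d: "0 < d" and incr: "\<And>x h. a \<le> x \<Longrightarrow> 0 < h \<Longrightarrow> h < d \<Longrightarrow> x + h \<le> b \<Longrightarrow>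
        f (x + h) \<le> f x + e / (t - s) * h"
      using local[of "e / (t - s)"] \<open>s < t\<close> by auto
    obtain n :: nat where n: "(t - s) / d < real n" using reals_Archimedean2 by blast
    then have n0: "0 < real n" using \<open>s < t\<close> d by (smt (verit) divide_pos_pos)
    define h where "h = (t - s) / n"
    have h0: "0 < h" and hd: "h < d" and nh: "real n * h = t - s"
      using n n0 \<open>s < t\<close> d by (auto simp: h_def field_simps)
    have "f (s + real k * h) \<le> f s + e / (t - s) * (real k * h)" if "k \<le> n" for k :: nat
      using that
    proof (induction k)
      case (Suc k)
      have "real (Suc k) * h \<le> t - s"
        using Suc.prems h0 nh by (metis mult_right_mono of_nat_le_iff less_imp_le)
      moreover have "a \<le> s + real k * h" using st h0 by (simp add: add_increasing2)
      ultimately have "f (s + real k * h + h) \<le> f (s + real k * h) + e / (t - s) * h"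
        using incr[of "s + real k * h" h] h0 hd st by (simp add: algebra_simps)
      with Suc show ?case by (simp add: algebra_simps)
    qed simp
    from this[of n] show "f t \<le> f s + e"
      using nh \<open>s < t\<close> by simp
  qed
qed simp

lemma sum_increments_le_of_disjoint_intervals:
  fixes f :: "real \<Rightarrow> real" and a b :: "'i \<Rightarrow> real"
  assumes mono: "\<And>s t. base \<le> s \<Longrightarrow> s \<le> t \<Longrightarrow> f s \<le> f t"
    and disj: "\<forall>n m. n \<noteq> m \<longrightarrow> {a n<..<b n} \<inter> {a m<..<b m} = {}"
    and ab: "\<And>n. base \<le> a n" "\<And>n. a n < b n"
  shows "finite I \<Longrightarrow> base \<le> x \<Longrightarrow> \<forall>n\<in>I. b n \<le> x \<Longrightarrow> (\<Sum>n\<in>I. f (b n) - f (a n)) \<le> f x - f base"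
proof (induction I arbitrary: x rule: finite_psubset_induct)
  case (psubset I)
  show ?case
  proof (cases "I = {}")
    case True
    then show ?thesis using mono[of base x] psubset.prems by simp
  next
    case False
    \<comment> \<open>The interval with the rightmost left end lies to the right of all the others.\<close>
    have "Max (a ` I) \<in> a ` I" using False psubset.hyps by (intro Max_in) auto
    then obtain k where k: "k \<in> I" "a k = Max (a ` I)" by auto
    have others: "b m \<le> a k" if m: "m \<in> I - {k}" for m
    proof (rule ccontr)
      assume "\<not> b m \<le> a k"
      moreover have "a m \<le> a k" using k m psubset.hyps by simp
      ultimately have "(a k + min (b m) (b k)) / 2 \<in> {a m<..<b m} \<inter> {a k<..<b k}"
        using ab(2)[of k] by auto
      with disj m show False by blast
    qed
    have "(\<Sum>n\<in>I. f (b n) - f (a n)) = (f (b k) - f (a k)) + (\<Sum>n\<in>I - {k}. f (b n) - f (a n))"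
      using k(1) psubset.hyps by (simp add: sum.remove)
    also have "\<dots> \<le> f (b k) - f base"
      using psubset.IH[of "I - {k}" "a k"] k(1) others ab(1)[of k] by fastforce
    also have "\<dots> \<le> f x - f base"
      using mono[of "b k" x] ab[of k] psubset.prems k(1) by force
    finally show ?thesis .
  qed
qed

lemma continuous_on_contraction_apply:
  fixes S :: "real \<Rightarrow> 'a::real_normed_vector \<Rightarrow>\<^sub>L 'a"
  assumes strong: "\<And>x. continuous_on {0..} (\<lambda>t. S t x)" and contr: "\<And>t. 0 \<le> t \<Longrightarrow> norm (S t) \<le> 1"
    and sf: "continuous_on D sf" and yf: "continuous_on D yf" and pos: "\<forall>p\<in>D. 0 \<le> sf p"
  shows "continuous_on D (\<lambda>p. S (sf p) (yf p))"
  unfolding continuous_on_def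
proof
  fix p assume p: "p \<in> D"
  have "continuous_on D (\<lambda>q. S (sf q) (yf p))"
    by (rule continuous_on_compose2[OF strong sf]) (use pos in auto)
  then have fixed: "((\<lambda>q. S (sf q) (yf p)) \<longlongrightarrow> S (sf p) (yf p)) (at p within D)"
    using p unfolding continuous_on_def by auto
  have "((\<lambda>q. norm (yf q - yf p)) \<longlongrightarrow> 0) (at p within D)"
    using yf p unfolding continuous_on_def by (simp add: LIM_zero_iff tendsto_norm_zero)
  moreover have "norm (S (sf q) v) \<le> norm v" if "q \<in> D" for q v
    using norm_blinfun[of "S (sf q)" v] contr[of "sf q"] pos that
    by (meson dual_order.trans mult_left_le_one_le norm_ge_zero)
  then have "\<forall>\<^sub>F q in at p within D. norm (S (sf q) (yf q - yf p)) \<le> norm (yf q - yf p)"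
    unfolding eventually_at_filter by (auto intro!: always_eventually)
  ultimately have "((\<lambda>q. S (sf q) (yf q - yf p)) \<longlongrightarrow> 0) (at p within D)"
    by (rule Lim_null_comparison[rotated])
  from tendsto_add[OF this fixed]
  show "((\<lambda>q. S (sf q) (yf q)) \<longlongrightarrow> S (sf p) (yf p)) (at p within D)"
    by (simp add: blinfun.diff_right)
qed

lemma set_integral_le_of_has_integral:
  fixes f g :: "real \<Rightarrow> real"
  assumes g: "(g has_integral I) {p..q}" and le: "\<And>x. x \<in> {p..q} \<Longrightarrow> f x \<le> g x" and "0 \<le> I"
  shows "(LINT x:{p..q}|lborel. f x) \<le> I"
proof (cases "set_integrable lborel {p..q} f")
  case True
  have "integral {p..q} f \<le> I"
    by (rule has_integral_le[OF integrable_integral[OF set_borel_integral_eq_integral(1)[OF True]] g le])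
  then show ?thesis
    using set_borel_integral_eq_integral(2)[OF True] by simp
next
  case False
  then show ?thesis
    using \<open>0 \<le> I\<close> by (simp add: set_lebesgue_integral_def set_integrable_def not_integrable_integral_eq)
qed

lemma ex_small_of_bounded_weighted_sums:
  fixes c x :: "nat \<Rightarrow> real"
  assumes div: "filterlim (\<lambda>N. \<Sum>n<N. c n) at_top sequentially" and c: "\<And>n. 0 \<le> c n"
    and bound: "\<And>N. (\<Sum>n<N. c n * x n) \<le> C" and "0 < e"
  shows "\<exists>n. x n < e"
proof (rule ccontr)
  assume "\<not> (\<exists>n. x n < e)"
  then have "c n * e \<le> c n * x n" for n
    using c[of n] by (intro mult_left_mono) (auto simp: not_less)
  then have "(\<Sum>n<N. c n) * e \<le> C" for N
    using order_trans[OF sum_mono bound, of N "\<lambda>n. c n * e"] by (simp add: sum_distrib_right)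
  moreover obtain N where "C / e + 1 \<le> (\<Sum>n<N. c n)"
    using div unfolding filterlim_at_top eventually_sequentially by blast
  ultimately show False
    using \<open>0 < e\<close> by (smt (verit, best) mult_right_mono divide_pos_pos le_divide_eq)
qed

lemma norm_sq_add_inner_diff_le:
  fixes x y :: "'a::real_inner"
  shows "(norm y)\<^sup>2 + 2 * inner y (x - y) \<le> (norm x)\<^sup>2"
proof -
  have "(norm x)\<^sup>2 = (norm y)\<^sup>2 + 2 * inner y (x - y) + (norm (x - y))\<^sup>2"
    by (simp add: power2_norm_eq_inner inner_diff inner_commute algebra_simps)
  then show ?thesis by simp
qed

lemma mult_square_le_of_le_add:
  fixes w x y u :: real
  assumes "0 \<le> w" "w \<le> 1" "0 \<le> x" "0 \<le> y" "0 \<le> u" "x \<le> y + u"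
  shows "w * x\<^sup>2 \<le> 2 * (w * y\<^sup>2) + 2 * u\<^sup>2"
proof -
  have "x\<^sup>2 \<le> (y + u)\<^sup>2" using assms by (intro power_mono) auto
  also have "\<dots> \<le> 2 * y\<^sup>2 + 2 * u\<^sup>2"
    using zero_le_power2[of "y - u"] by (simp add: power2_eq_square algebra_simps)
  finally have "w * x\<^sup>2 \<le> w * (2 * y\<^sup>2 + 2 * u\<^sup>2)" by (rule mult_left_mono) (use assms in simp)
  moreover have "w * u\<^sup>2 \<le> u\<^sup>2" using assms by (simp add: mult_left_le_one_le)
  ultimately show ?thesis by (simp add: algebra_simps)
qed

locale damped_mild_solution =
  fixes S :: "real \<Rightarrow> ('h::{real_inner, complete_space} \<Rightarrow>\<^sub>L 'h)"
    and B :: "'u::{real_inner, complete_space} \<Rightarrow>\<^sub>L 'h"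
    and Bs :: "'h \<Rightarrow>\<^sub>L 'u"
    and \<alpha> :: "real \<Rightarrow> real"
    and z0 :: 'h and z :: "real \<Rightarrow> 'h"
  assumes semigroup: "contraction_semigroup S"
    and adjoint: "is_adjoint B Bs"
    and \<alpha>_measurable: "\<alpha> \<in> borel_measurable (restrict_space lborel {0..})"
    and \<alpha>_bounds: "\<forall>t\<ge>0. 0 \<le> \<alpha> t \<and> \<alpha> t \<le> 1"
    and mild: "mild_solution S B Bs \<alpha> z0 z"
begin

lemma S_zero: "S 0 x = x"
  using semigroup unfolding contraction_semigroup_def by auto

lemma S_add: "0 \<le> t \<Longrightarrow> 0 \<le> s \<Longrightarrow> S (t + s) x = S t (S s x)"
  using semigroup unfolding contraction_semigroup_def by auto

lemma norm_S_le_one: "0 \<le> t \<Longrightarrow> norm (S t) \<le> 1"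
  using semigroup unfolding contraction_semigroup_def by auto

lemma norm_S_apply_le: "0 \<le> t \<Longrightarrow> norm (S t x) \<le> norm x"
  using norm_blinfun[of "S t" x] norm_S_le_one[of t]
  by (meson dual_order.trans mult_left_le_one_le norm_ge_zero)

lemma S_strongly_continuous: "continuous_on {0..} (\<lambda>t. S t x)"
  using semigroup unfolding contraction_semigroup_def by auto

lemma z_continuous: "continuous_on {0..} z"
  using mild unfolding mild_solution_def by auto

lemma Bs_z_continuous: "continuous_on {0..} (\<lambda>r. Bs (z r))"
  using z_continuous by (auto intro!: continuous_intros)

lemma mild_has_integral:
  "0 \<le> t \<Longrightarrow> ((\<lambda>s. S (t - s) (\<alpha> s *\<^sub>R B (Bs (z s)))) has_integral (S t z0 - z t)) {0..t}"
  using mild unfolding mild_solution_def by auto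

lemma inner_B_Bs: "inner x (B (Bs x)) = (norm (Bs x))\<^sup>2"
  using adjoint unfolding is_adjoint_def by (metis inner_commute power2_norm_eq_inner)

lemma \<alpha>_nonneg: "0 \<le> t \<Longrightarrow> 0 \<le> \<alpha> t" and \<alpha>_le_one: "0 \<le> t \<Longrightarrow> \<alpha> t \<le> 1"
  using \<alpha>_bounds by auto

lemma integrable_\<alpha>_mult: "continuous_on {p..q} h \<Longrightarrow> 0 \<le> p \<Longrightarrow> (\<lambda>r. \<alpha> r * h r) integrable_on {p..q}"
  by (rule integrable_on_weighted_continuous[OF \<alpha>_measurable \<alpha>_bounds])

lemma integrable_\<alpha>_norm_Bs_z: "0 \<le> p \<Longrightarrow> (\<lambda>r. \<alpha> r * norm (Bs (z r))) integrable_on {p..q}"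
  and integrable_\<alpha>_norm_Bs_z_sq: "0 \<le> p \<Longrightarrow> (\<lambda>r. \<alpha> r * (norm (Bs (z r)))\<^sup>2) integrable_on {p..q}"
  by (auto intro!: integrable_\<alpha>_mult continuous_intros continuous_on_subset[OF Bs_z_continuous])

definition forcing :: "real \<Rightarrow> real \<Rightarrow> 'h" where
  "forcing t r = S (t - r) (\<alpha> r *\<^sub>R B (Bs (z r)))"

lemma norm_forcing_le:
  assumes "r \<le> t" "0 \<le> r"
  shows "norm (forcing t r) \<le> norm B * (\<alpha> r * norm (Bs (z r)))"
proof -
  have "norm (forcing t r) \<le> norm (\<alpha> r *\<^sub>R B (Bs (z r)))"
    unfolding forcing_def using assms by (intro norm_S_apply_le) simp
  also have "\<dots> = \<alpha> r * norm (B (Bs (z r)))"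
    using \<alpha>_nonneg[OF assms(2)] by simp
  also have "\<dots> \<le> \<alpha> r * (norm B * norm (Bs (z r)))"
    using \<alpha>_nonneg[OF assms(2)] by (intro mult_left_mono norm_blinfun)
  finally show ?thesis by (simp add: algebra_simps)
qed

text \<open>Tested against a fixed vector: the state space has sort \<open>{real_inner, complete_space}\<close>,
  which Isabelle does not identify with \<open>banach\<close>, so vector-valued interval splitting is unavailable.\<close>
lemma mild_restart_inner:
  assumes "0 \<le> t" "0 \<le> h"
  shows "((\<lambda>r. inner v (forcing (t + h) r)) has_integral inner v (S h (z t) - z (t + h))) {t..t + h}"
proof -
  have whole: "((\<lambda>r. inner v (forcing (t + h) r)) has_integral inner v (S (t + h) z0 - z (t + h))) {0..t + h}"
    using has_integral_linear[OF mild_has_integral[of "t + h"] bounded_linear_inner_right[of v]] assms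
    by (simp add: forcing_def o_def)
  have propagated: "((\<lambda>r. inner v (S h (forcing t r))) has_integral inner v (S h (S t z0 - z t))) {0..t}"
    using has_integral_linear[OF mild_has_integral[of t], of "\<lambda>x. inner v (S h x)"] assms
    by (simp add: forcing_def o_def
        bounded_linear_compose[OF bounded_linear_inner_right blinfun.bounded_linear_right])
  have "inner v (S h (S t z0 - z t)) = inner v (S (t + h) z0 - S h (z t))"
    using S_add[of h t] assms by (simp add: blinfun.diff_right add.commute)
  moreover have "inner v (S h (forcing t r)) = inner v (forcing (t + h) r)" if "r \<in> {0..t}" for r
    using S_add[of h "t - r"] that assms by (simp add: forcing_def algebra_simps)
  ultimately have initial: "((\<lambda>r. inner v (forcing (t + h) r))
      has_integral inner v (S (t + h) z0 - S h (z t))) {0..t}"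
    using has_integral_eq[OF _ propagated, of "\<lambda>r. inner v (forcing (t + h) r)"] by simp
  have rest: "(\<lambda>r. inner v (forcing (t + h) r)) integrable_on {t..t + h}"
    by (rule integrable_on_subinterval[OF has_integral_integrable[OF whole]]) (use assms in auto)
  have "((\<lambda>r. inner v (forcing (t + h) r)) has_integral
      inner v (S (t + h) z0 - S h (z t)) + integral {t..t + h} (\<lambda>r. inner v (forcing (t + h) r))) {0..t + h}"
    by (rule has_integral_combine[OF _ _ initial integrable_integral[OF rest]]) (use assms in auto)
  then have "inner v (S (t + h) z0 - S h (z t)) + integral {t..t + h} (\<lambda>r. inner v (forcing (t + h) r))
      = inner v (S (t + h) z0 - z (t + h))"
    using whole has_integral_unique by blast
  then have "integral {t..t + h} (\<lambda>r. inner v (forcing (t + h) r)) = inner v (S h (z t) - z (t + h))"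
    by (simp add: inner_diff_right)
  then show ?thesis using integrable_integral[OF rest] by simp
qed

lemma norm_S_z_diff_le:
  assumes "0 \<le> t" "0 \<le> h"
  shows "norm (S h (z t) - z (t + h)) \<le> norm B * integral {t..t + h} (\<lambda>r. \<alpha> r * norm (Bs (z r)))"
proof -
  define I where "I = S h (z t) - z (t + h)"
  define J where "J = norm B * integral {t..t + h} (\<lambda>r. \<alpha> r * norm (Bs (z r)))"
  have J: "((\<lambda>r. norm I * (norm B * (\<alpha> r * norm (Bs (z r))))) has_integral norm I * J) {t..t + h}"
    unfolding J_def using integrable_\<alpha>_norm_Bs_z[OF assms(1)]
    by (intro has_integral_mult_right integrable_integral)
  have "(norm I)\<^sup>2 \<le> norm I * J"
  proof (rule has_integral_le[OF _ J])
    show "((\<lambda>r. inner I (forcing (t + h) r)) has_integral (norm I)\<^sup>2) {t..t + h}"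
      using mild_restart_inner[OF assms, of I] unfolding I_def by (simp add: power2_norm_eq_inner)
    show "inner I (forcing (t + h) r) \<le> norm I * (norm B * (\<alpha> r * norm (Bs (z r))))"
      if "r \<in> {t..t + h}" for r
      using order_trans[OF norm_cauchy_schwarz mult_left_mono[OF norm_forcing_le]] that assms by auto
  qed
  moreover have "0 \<le> J"
    unfolding J_def using integrable_\<alpha>_norm_Bs_z[OF assms(1)] \<alpha>_nonneg assms(1)
    by (intro mult_nonneg_nonneg integral_nonneg) auto
  ultimately have "norm I \<le> J"
    by (cases "norm I = 0") (auto simp: power2_eq_square)
  then show ?thesis unfolding I_def J_def .
qed

lemma inner_shift_uniformly_close:
  assumes "0 < e"
  shows "\<exists>d>0. \<forall>r\<in>{0..M}. \<forall>\<sigma>\<in>{0..1}. \<sigma> < d \<longrightarrow>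
     \<bar>inner (z (r + \<sigma>)) (S \<sigma> (B (Bs (z r)))) - (norm (Bs (z r)))\<^sup>2\<bar> < e"
proof -
  define K where "K = {0..M} \<times> {0..(1::real)}"
  define \<Phi> where "\<Phi> p = inner (z (fst p + snd p)) (S (snd p) (B (Bs (z (fst p)))))" for p
  have "continuous_on K (\<lambda>p. z (fst p + snd p))"
    by (rule continuous_on_compose2[OF z_continuous]) (auto simp: K_def intro!: continuous_intros)
  moreover have "continuous_on K (\<lambda>p. S (snd p) (B (Bs (z (fst p)))))"
  proof (rule continuous_on_contraction_apply[OF S_strongly_continuous norm_S_le_one])
    have "continuous_on K (\<lambda>p. Bs (z (fst p)))"
      by (rule continuous_on_compose2[OF Bs_z_continuous]) (auto simp: K_def intro!: continuous_intros)
    then show "continuous_on K (\<lambda>p. B (Bs (z (fst p))))"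
      by (auto intro!: continuous_intros)
  qed (auto simp: K_def intro!: continuous_intros)
  ultimately have "continuous_on K \<Phi>" unfolding \<Phi>_def by (rule continuous_on_inner)
  then have "uniformly_continuous_on K \<Phi>"
    by (rule compact_uniformly_continuous) (auto simp: K_def intro!: compact_Times)
  then obtain d where d: "d > 0" "\<And>x x'. x \<in> K \<Longrightarrow> x' \<in> K \<Longrightarrow> dist x' x < d \<Longrightarrow> dist (\<Phi> x') (\<Phi> x) < e"
    unfolding uniformly_continuous_on_def using assms by metis
  show ?thesis
  proof (intro exI[of _ d] conjI ballI impI)
    fix r \<sigma> assume r: "r \<in> {0..M}" and \<sigma>: "\<sigma> \<in> {0..1}" "\<sigma> < d"
    then have "dist (\<Phi> (r, \<sigma>)) (\<Phi> (r, 0)) < e"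
      using d(2)[of "(r, 0)" "(r, \<sigma>)"] by (auto simp: K_def dist_Pair_Pair dist_real_def)
    moreover have "\<Phi> (r, 0) = (norm (Bs (z r)))\<^sup>2" unfolding \<Phi>_def by (simp add: S_zero inner_B_Bs)
    ultimately show "\<bar>inner (z (r + \<sigma>)) (S \<sigma> (B (Bs (z r)))) - (norm (Bs (z r)))\<^sup>2\<bar> < e"
      unfolding \<Phi>_def by (simp add: dist_real_def)
  qed (use d in auto)
qed

definition dissipation :: "real \<Rightarrow> real" where
  "dissipation t = integral {0..t} (\<lambda>r. \<alpha> r * (norm (Bs (z r)))\<^sup>2)"

definition energy :: "real \<Rightarrow> real" where
  "energy t = (norm (z t))\<^sup>2 + 2 * dissipation t"

lemma dissipation_zero: "dissipation 0 = 0"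
  unfolding dissipation_def by simp

lemma dissipation_diff:
  "0 \<le> s \<Longrightarrow> s \<le> t \<Longrightarrow> dissipation t - dissipation s = integral {s..t} (\<lambda>r. \<alpha> r * (norm (Bs (z r)))\<^sup>2)"
  unfolding dissipation_def
  using Henstock_Kurzweil_Integration.integral_combine[OF _ _ integrable_\<alpha>_norm_Bs_z_sq[of 0 t], of s]
  by simp

lemma dissipation_mono: "0 \<le> s \<Longrightarrow> s \<le> t \<Longrightarrow> dissipation s \<le> dissipation t"
  using dissipation_diff[of s t] integral_nonneg[OF integrable_\<alpha>_norm_Bs_z_sq[of s t]] \<alpha>_nonneg
  by fastforce

lemma energy_local_increment:
  assumes "0 < e"
  shows "\<exists>d>0. \<forall>t h. 0 \<le> t \<longrightarrow> 0 < h \<longrightarrow> h < d \<longrightarrow> t + h \<le> M \<longrightarrow> energy (t + h) \<le> energy t + e * h"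
proof -
  obtain d where d: "0 < d" and close: "\<And>r \<sigma>. r \<in> {0..M} \<Longrightarrow> \<sigma> \<in> {0..1} \<Longrightarrow> \<sigma> < d \<Longrightarrow>
      \<bar>inner (z (r + \<sigma>)) (S \<sigma> (B (Bs (z r)))) - (norm (Bs (z r)))\<^sup>2\<bar> < e / 2"
    using inner_shift_uniformly_close[of "e / 2" M] assms by auto
  show ?thesis
  proof (intro exI[of _ "min d 1"] conjI allI impI)
    fix t h :: real assume t: "0 \<le> t" and h: "0 < h" "h < min d 1" and tM: "t + h \<le> M"
    define G where "G = integral {t..t + h} (\<lambda>r. \<alpha> r * (norm (Bs (z r)))\<^sup>2)"
    have lower: "((\<lambda>r. \<alpha> r * (norm (Bs (z r)))\<^sup>2 - e / 2) has_integral (G - e / 2 * h)) {t..t + h}"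
      unfolding G_def using has_integral_const_real[of "e / 2" t "t + h"] h
      by (intro has_integral_diff integrable_integral[OF integrable_\<alpha>_norm_Bs_z_sq[OF t]])
        (auto simp: mult.commute)
    have "\<alpha> r * (norm (Bs (z r)))\<^sup>2 - e / 2 \<le> inner (z (t + h)) (forcing (t + h) r)"
      if r: "r \<in> {t..t + h}" for r
    proof -
      have "\<bar>inner (z (t + h)) (S (t + h - r) (B (Bs (z r)))) - (norm (Bs (z r)))\<^sup>2\<bar> < e / 2"
        using close[of r "t + h - r"] r t h tM by auto
      then have "(norm (Bs (z r)))\<^sup>2 - e / 2 \<le> inner (z (t + h)) (S (t + h - r) (B (Bs (z r))))"
        by (simp only: abs_less_iff) linarith
      then have "\<alpha> r * ((norm (Bs (z r)))\<^sup>2 - e / 2) \<le> inner (z (t + h)) (forcing (t + h) r)"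
        unfolding forcing_def using \<alpha>_nonneg[of r] r t
        by (simp add: mult_left_mono blinfun.scaleR_right)
      moreover have "\<alpha> r * (e / 2) \<le> e / 2"
        using \<alpha>_le_one[of r] r t assms by (simp add: mult_left_le_one_le)
      ultimately show ?thesis by (simp add: algebra_simps)
    qed
    then have "G - e / 2 * h \<le> inner (z (t + h)) (S h (z t) - z (t + h))"
      using h by (intro has_integral_le[OF lower mild_restart_inner[OF t]]) auto
    moreover have "(norm (z (t + h)))\<^sup>2 + 2 * inner (z (t + h)) (S h (z t) - z (t + h)) \<le> (norm (z t))\<^sup>2"
      using norm_sq_add_inner_diff_le[of "z (t + h)" "S h (z t)"] norm_S_apply_le[of h "z t"] h
      by (smt (verit) norm_ge_zero power_mono)
    moreover have "dissipation (t + h) = dissipation t + G"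
      unfolding G_def using dissipation_diff[OF t, of "t + h"] h by simp
    ultimately show "energy (t + h) \<le> energy t + e * h"
      unfolding energy_def by (simp add: algebra_simps)
  qed (use d in auto)
qed

lemma energy_antimono: "0 \<le> s \<Longrightarrow> s \<le> t \<Longrightarrow> energy t \<le> energy s"
  by (rule antimono_of_local_increment_bound[where a = 0 and b = t, OF energy_local_increment]) auto

lemma norm_z_antimono:
  assumes "0 \<le> s" "s \<le> t"
  shows "norm (z t) \<le> norm (z s)"
proof (rule power2_le_imp_le)
  show "(norm (z t))\<^sup>2 \<le> (norm (z s))\<^sup>2"
    using energy_antimono[OF assms] dissipation_mono[OF assms] unfolding energy_def by linarith
qed simp

lemma dissipation_le: "0 \<le> t \<Longrightarrow> 2 * dissipation t \<le> (norm (z 0))\<^sup>2"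
  using energy_antimono[of 0 t] dissipation_zero unfolding energy_def
  by (smt (verit) zero_le_power2)

lemma tendsto_norm_z_zeroI:
  assumes "\<And>e. 0 < e \<Longrightarrow> \<exists>t\<ge>0. norm (z t) < e"
  shows "((\<lambda>t. norm (z t)) \<longlongrightarrow> 0) at_top"
proof (rule tendstoI)
  fix e :: real assume "0 < e"
  then obtain t0 where "0 \<le> t0" "norm (z t0) < e" using assms by blast
  then have "norm (z t) < e" if "t0 \<le> t" for t
    using norm_z_antimono[of t0 t] that by simp
  then show "\<forall>\<^sub>F t in at_top. dist (norm (z t)) 0 < e"
    unfolding eventually_at_top_linorder by auto
qed

lemma norm_Bs_S_z_le:
  assumes a: "0 \<le> a" and \<tau>: "0 \<le> \<tau>" "\<tau> \<le> T"
  shows "norm (Bs (S \<tau> (z a)))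
    \<le> norm (Bs (z (a + \<tau>))) + norm Bs * norm B * integral {a..a + T} (\<lambda>r. \<alpha> r * norm (Bs (z r)))"
proof -
  have "norm (S \<tau> (z a) - z (a + \<tau>)) \<le> norm B * integral {a..a + \<tau>} (\<lambda>r. \<alpha> r * norm (Bs (z r)))"
    using norm_S_z_diff_le a \<tau> by simp
  also have "\<dots> \<le> norm B * integral {a..a + T} (\<lambda>r. \<alpha> r * norm (Bs (z r)))"
    using integrable_\<alpha>_norm_Bs_z[OF a] \<alpha>_nonneg a \<tau>
    by (intro mult_left_mono integral_subset_le) auto
  finally have diff: "norm (S \<tau> (z a) - z (a + \<tau>)) \<le> \<dots>" .
  have "norm (Bs (S \<tau> (z a))) \<le> norm (Bs (z (a + \<tau>))) + norm (Bs (S \<tau> (z a) - z (a + \<tau>)))"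
    using norm_triangle_sub[of "Bs (S \<tau> (z a))" "Bs (z (a + \<tau>))"] by (simp add: blinfun.diff_right)
  also have "\<dots> \<le> norm (Bs (z (a + \<tau>))) + norm Bs * norm (S \<tau> (z a) - z (a + \<tau>))"
    using norm_blinfun by simp
  also have "\<dots> \<le> norm (Bs (z (a + \<tau>))) + norm Bs * (norm B * integral {a..a + T} (\<lambda>r. \<alpha> r * norm (Bs (z r))))"
    using diff by (simp add: mult_left_mono)
  finally show ?thesis by (simp add: mult.assoc)
qed

lemma observability_transfer:
  assumes a: "0 \<le> a" and K: "classK S Bs T c (\<lambda>\<tau>. \<alpha> (a + \<tau>))" and TTm: "T \<le> Tm"
  shows "c * (norm (z a))\<^sup>2 \<le> (2 + 2 * (norm Bs * norm B)\<^sup>2 * Tm\<^sup>2) * (dissipation (a + T) - dissipation a)"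
proof -
  have T: "0 < T" and observe: "c * (norm (z a))\<^sup>2 \<le> (LINT \<tau>:{0..T}|lborel. \<alpha> (a + \<tau>) * (norm (Bs (S \<tau> (z a))))\<^sup>2)"
    using K unfolding classK_def by auto
  define E where "E = integral {a..a + T} (\<lambda>r. \<alpha> r * (norm (Bs (z r)))\<^sup>2)"
  define J where "J = integral {a..a + T} (\<lambda>r. \<alpha> r * norm (Bs (z r)))"
  define \<beta> where "\<beta> = norm Bs * norm B"
  have E: "E = dissipation (a + T) - dissipation a"
    unfolding E_def using dissipation_diff[OF a, of "a + T"] T by simp
  have E0: "0 \<le> E"
    unfolding E_def using integrable_\<alpha>_norm_Bs_z_sq[OF a] \<alpha>_nonneg a by (intro integral_nonneg) auto
  have J0: "0 \<le> J"
    unfolding J_def using integrable_\<alpha>_norm_Bs_z[OF a] \<alpha>_nonneg a by (intro integral_nonneg) auto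
  have "J\<^sup>2 \<le> (a + T - a) * E"
    unfolding J_def E_def
    by (rule weighted_integral_square_le[OF integrable_\<alpha>_norm_Bs_z[OF a] integrable_\<alpha>_norm_Bs_z_sq[OF a]])
      (use \<alpha>_bounds a T in auto)
  then have "J\<^sup>2 \<le> T * E" by simp
  have shifted: "((\<lambda>\<tau>. \<alpha> (a + \<tau>) * (norm (Bs (z (a + \<tau>))))\<^sup>2) has_integral E) {0..T}"
    using has_integral_shift_real_ivl[OF integrable_integral[OF integrable_\<alpha>_norm_Bs_z_sq[OF a, of "a + T"]], of a]
    unfolding E_def by (simp add: add.commute)
  have "2 * (\<beta> * J)\<^sup>2 * T \<le> 2 * \<beta>\<^sup>2 * Tm\<^sup>2 * E"
  proof -
    have "2 * (\<beta> * J)\<^sup>2 * T = 2 * \<beta>\<^sup>2 * (J\<^sup>2 * T)"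
      by (simp add: power_mult_distrib)
    also have "\<dots> \<le> 2 * \<beta>\<^sup>2 * (T\<^sup>2 * E)"
      using mult_right_mono[OF \<open>J\<^sup>2 \<le> T * E\<close>, of T] T
      by (intro mult_left_mono) (auto simp: power2_eq_square algebra_simps)
    also have "\<dots> \<le> 2 * \<beta>\<^sup>2 * (Tm\<^sup>2 * E)"
      using power_mono[OF TTm, of 2] T E0 by (intro mult_left_mono mult_right_mono) auto
    finally show ?thesis by (simp add: mult.assoc)
  qed
  moreover
  have "(LINT \<tau>:{0..T}|lborel. \<alpha> (a + \<tau>) * (norm (Bs (S \<tau> (z a))))\<^sup>2) \<le> 2 * E + 2 * (\<beta> * J)\<^sup>2 * T"
  proof (rule set_integral_le_of_has_integral)
    show "((\<lambda>\<tau>. 2 * (\<alpha> (a + \<tau>) * (norm (Bs (z (a + \<tau>))))\<^sup>2) + 2 * (\<beta> * J)\<^sup>2)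
        has_integral 2 * E + 2 * (\<beta> * J)\<^sup>2 * T) {0..T}"
      using has_integral_const_real[of "2 * (\<beta> * J)\<^sup>2" 0 T] T
      by (intro has_integral_add has_integral_mult_right shifted) (auto simp: mult.commute)
    show "\<alpha> (a + \<tau>) * (norm (Bs (S \<tau> (z a))))\<^sup>2 \<le> 2 * (\<alpha> (a + \<tau>) * (norm (Bs (z (a + \<tau>))))\<^sup>2) + 2 * (\<beta> * J)\<^sup>2"
      if "\<tau> \<in> {0..T}" for \<tau>
      using that a J0 norm_Bs_S_z_le[OF a, of \<tau> T] \<alpha>_nonneg[of "a + \<tau>"] \<alpha>_le_one[of "a + \<tau>"]
      unfolding \<beta>_def J_def by (intro mult_square_le_of_le_add) auto
  qed (use E0 T in auto)
  moreover have "(2 + 2 * \<beta>\<^sup>2 * Tm\<^sup>2) * E = 2 * E + 2 * \<beta>\<^sup>2 * Tm\<^sup>2 * E"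
    by (simp add: algebra_simps)
  ultimately show ?thesis
    using observe unfolding E[symmetric] \<beta>_def[symmetric] by linarith
qed

lemma sum_observability_le:
  fixes a b c :: "nat \<Rightarrow> real"
  assumes a: "\<forall>n. 0 \<le> a n"
    and disjoint: "\<forall>n m. n \<noteq> m \<longrightarrow> {a n<..<b n} \<inter> {a m<..<b m} = {}"
    and K: "\<forall>n. classK S Bs (b n - a n) (c n) (\<lambda>t. \<alpha> (a n + t))"
    and Tm: "\<And>n. b n - a n \<le> Tm"
  shows "(\<Sum>n<N. c n * (norm (z (a n)))\<^sup>2) \<le> (1 + (norm Bs * norm B)\<^sup>2 * Tm\<^sup>2) * (norm (z 0))\<^sup>2"
proof -
  define \<kappa> where "\<kappa> = 2 + 2 * (norm Bs * norm B)\<^sup>2 * Tm\<^sup>2"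
  have ab: "a n < b n" for n
    using K unfolding classK_def by auto
  define x where "x = (\<Sum>n<N. b n)"
  have b0: "0 \<le> b n" for n using a ab[of n] by (meson less_imp_le order_trans)
  have "(\<Sum>n<N. c n * (norm (z (a n)))\<^sup>2) \<le> (\<Sum>n<N. \<kappa> * (dissipation (b n) - dissipation (a n)))"
    using observability_transfer[of "a n" "b n - a n" "c n" Tm for n] a K Tm
    unfolding \<kappa>_def by (intro sum_mono) auto
  also have "\<dots> \<le> \<kappa> * (dissipation x - dissipation 0)"
  proof -
    have "(\<Sum>n<N. dissipation (b n) - dissipation (a n)) \<le> dissipation x - dissipation 0"
      by (rule sum_increments_le_of_disjoint_intervals[where base = 0 and f = dissipation,
            OF dissipation_mono disjoint])
        (use a ab b0 in \<open>auto simp: x_def intro!: member_le_sum sum_nonneg\<close>)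
    then show ?thesis
      unfolding \<kappa>_def by (simp add: sum_distrib_left[symmetric] mult_left_mono)
  qed
  also have "\<dots> \<le> \<kappa> * ((norm (z 0))\<^sup>2 / 2)"
    using dissipation_le[of x] dissipation_zero b0 unfolding x_def
    by (intro mult_left_mono) (auto simp: \<kappa>_def sum_nonneg)
  finally show ?thesis unfolding \<kappa>_def by (simp add: algebra_simps)
qed

end

theorem theorem5p1:
  fixes S :: "real \<Rightarrow> ('h::{real_inner, complete_space} \<Rightarrow>\<^sub>L 'h)"
    and B :: "'u::{real_inner, complete_space} \<Rightarrow>\<^sub>L 'h"
    and Bs :: "'h \<Rightarrow>\<^sub>L 'u"
    and a b c :: "nat \<Rightarrow> real"
    and \<alpha> :: "real \<Rightarrow> real"
  assumes "contraction_semigroup S"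
    and "is_adjoint B Bs"
    and "\<forall>n. 0 \<le> a n"
    and "\<forall>n m. n \<noteq> m \<longrightarrow> {a n<..<b n} \<inter> {a m<..<b m} = {}"
    and "\<forall>n. c n > 0"
    and "\<alpha> \<in> borel_measurable (restrict_space lborel {0..})"
    and "\<forall>t\<ge>0. 0 \<le> \<alpha> t \<and> \<alpha> t \<le> 1"
    and "\<forall>n. classK S Bs (b n - a n) (c n) (\<lambda>t. \<alpha> (a n + t))"
    and "bdd_above (range (\<lambda>n. b n - a n))"
    and "filterlim (\<lambda>N. \<Sum>n<N. c n) at_top sequentially"
    and "mild_solution S B Bs \<alpha> z0 z"
  shows "((\<lambda>t. norm (z t)) \<longlongrightarrow> 0) at_top"
proof -
  interpret damped_mild_solution S B Bs \<alpha> z0 z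
    using assms(1,2,6,7,11) by unfold_locales
  obtain Tm where Tm: "\<And>n. b n - a n \<le> Tm"
    using assms(9) unfolding bdd_above_def by auto
  have small: "\<exists>n. (norm (z (a n)))\<^sup>2 < e" if "0 < e" for e
    using ex_small_of_bounded_weighted_sums[OF assms(10) _ sum_observability_le[OF assms(3,4,8) Tm] that]
      assms(5) by (simp add: less_imp_le)
  show ?thesis
  proof (rule tendsto_norm_z_zeroI)
    fix e :: real assume "0 < e"
    then obtain n where "(norm (z (a n)))\<^sup>2 < e\<^sup>2" using small[of "e\<^sup>2"] by auto
    then show "\<exists>t\<ge>0. norm (z t) < e"
      using assms(3) \<open>0 < e\<close> power2_less_imp_less by fastforce
  qed
qed

end
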